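(* Let $n\ge 2$, $d\ge 1$, $\tau>0$, $\sigma>0$. Let $\mu^\star_1,\mu^\star_2\stackrel{\mathrm{i.i.d.}}{\sim}\mathcal N(0,\tau^2 I_d)$ and $\xi_1,\dots,\xi_n\stackrel{\mathrm{i.i.d.}}{\sim}\mathcal N(0,\sigma^2 I_d)$, independent, let $z^\star_1,\dots,z^\star_n\in\{1,2\}$ be fixed labels with both classes $S^\star_\ell=\{i:z^\star_i=\ell\}$ nonempty, and $x_i=\mu^\star_{z^\star_i}+\xi_i$. Let $\{C_1,C_2\}$ be a fixed partition of $[n]$ into two nonempty sets. Fix $i\in[n]$, let $\ell$ with $i\in S^\star_\ell$, $j$ with $i\in C_j$, and $\overline j$ the other cluster index. If $$0<R^\ell_j\le R^\ell_{\overline j}\le 1,$$ then $$\mathbb P\bigl(\Delta_H^2(x_i,C_j)\le\Delta_H^2(x_i,C_{\overline j})\bigr)\le\rho^{d/4},$$ where $$\rho=1-\left(\frac{\tau^2\Bigl(\frac{|C_j|}{|C_j|-1}(1-R^\ell_j)^2-\frac{|C_{\overline j}|}{|C_{\overline j}|+1}(1-R^\ell_{\overline j})^2\Bigr)}{\tau^2\Bigl(\frac{|C_j|}{|C_j|-1}(1-R^\ell_j)^2+\frac{|C_{\overline j}|}{|C_{\overline j}|+1}(1-R^\ell_{\overline j})^2\Bigr)+\sigma^2}\right)^2,$$ and $0\le\rho<1$.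
   Context: $R^\ell_k=|C_k\cap S^\star_\ell|/|C_k|$ (purity). Centroids $\widehat\mu_k=|C_k|^{-1}\sum_{m\in C_k}x_m$. The Hartigan weighted distance is $\Delta_H^2(x_i,C_k)=\frac{|C_k|}{|C_k|-1}\|x_i-\widehat\mu_k\|^2$ if $i\in C_k$ and $\Delta_H^2(x_i,C_k)=\frac{|C_k|}{|C_k|+1}\|x_i-\widehat\mu_k\|^2$ if $i\notin C_k$. Randomness is only over the centers and noise. *)

theory Defs
  imports "HOL-Probability.Probability"
begin

text \<open>Vectors in R^d are represented as functions nat => real, coordinates k < d.\<close>

definition sqdist :: "nat \<Rightarrow> (nat \<Rightarrow> real) \<Rightarrow> (nat \<Rightarrow> real) \<Rightarrow> real" where
  "sqdist d u v = (\<Sum>k<d. (u k - v k)^2)"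

definition centroid :: "(nat \<Rightarrow> nat \<Rightarrow> real) \<Rightarrow> nat set \<Rightarrow> (nat \<Rightarrow> real)" where
  "centroid x C = (\<lambda>k. (1 / real (card C)) * (\<Sum>m\<in>C. x m k))"

definition hartigan_dist :: "nat \<Rightarrow> (nat \<Rightarrow> nat \<Rightarrow> real) \<Rightarrow> nat \<Rightarrow> nat set \<Rightarrow> real" where
  "hartigan_dist d x i C =
     (if i \<in> C then real (card C) / (real (card C) - 1) * sqdist d (x i) (centroid x C)
      else real (card C) / (real (card C) + 1) * sqdist d (x i) (centroid x C))"

definition purity :: "nat set \<Rightarrow> nat set \<Rightarrow> real" where
  "purity C S = real (card (C \<inter> S)) / real (card C)"

end

theory Submission
  imports Defs
begin

text \<open>
  The displacement \<open>x\<^sub>i - \<mu>\<^sub>C\<close> of a point from the centroid of a cluster \<open>C\<close> is a fixed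
  linear combination of the independent Gaussian coordinates of the centers and of the noise,
  so its \<open>d\<close> coordinates are i.i.d. centred normal variables; the purity of \<open>C\<close> enters only
  through their variance. Both Hartigan distances of \<open>x\<^sub>i\<close> are therefore scaled chi-square
  variables \<open>A U\<close> and \<open>B V\<close> with \<open>d\<close> degrees of freedom, but they are dependent.
  A Chernoff bound that needs no independence handles this: on the event \<open>A U \<le> B V\<close> we have
  \<open>1 \<le> exp (- t A U) exp (t B V)\<close>, so by AM-GM the probability is at most
  \<open>sqrt (E exp (-2 t A U) E exp (2 t B V))\<close>. Both chi-square moment generating functions are
  explicit, and the optimal \<open>t\<close> turns the bound into \<open>\<rho> powr (d / 4)\<close>.
\<close>

lemma (in prob_space) distributed_normal_lincomb:
  fixes Y :: "'i \<Rightarrow> 'a \<Rightarrow> real"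
  assumes fin: "finite J" and ind: "indep_vars (\<lambda>_. borel) Y J"
    and pos: "\<And>j. j \<in> J \<Longrightarrow> 0 < s j"
    and distr: "\<And>j. j \<in> J \<Longrightarrow> distributed M lborel (Y j) (normal_density 0 (s j))"
    and var_pos: "0 < (\<Sum>j\<in>J. (w j)\<^sup>2 * (s j)\<^sup>2)"
  shows "distributed M lborel (\<lambda>\<omega>. \<Sum>j\<in>J. w j * Y j \<omega>)
           (normal_density 0 (sqrt (\<Sum>j\<in>J. (w j)\<^sup>2 * (s j)\<^sup>2)))"
proof -
  define J' where "J' = {j\<in>J. w j \<noteq> 0}"
  have J'J: "J' \<subseteq> J" and fin': "finite J'"
    using fin by (auto simp: J'_def)
  have "J' \<noteq> {}"
    using var_pos sum.neutral[of J "\<lambda>j. (w j)\<^sup>2 * (s j)\<^sup>2"] by (auto simp: J'_def)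
  have sum_eq: "(\<Sum>j\<in>J. w j * Y j \<omega>) = (\<Sum>j\<in>J'. w j * Y j \<omega>)" for \<omega>
    by (rule sum.mono_neutral_right[OF fin J'J]) (auto simp: J'_def)
  have var_eq: "(\<Sum>j\<in>J. (w j)\<^sup>2 * (s j)\<^sup>2) = (\<Sum>j\<in>J'. (\<bar>w j\<bar> * s j)\<^sup>2)"
    by (subst sum.mono_neutral_right[OF fin J'J]) (auto simp: J'_def power_mult_distrib)
  have "indep_vars (\<lambda>_. borel) (\<lambda>j \<omega>. w j * Y j \<omega>) J'"
    by (rule indep_vars_compose2[OF indep_vars_subset[OF ind J'J]]) auto
  moreover have "distributed M lborel (\<lambda>\<omega>. w j * Y j \<omega>) (normal_density 0 (\<bar>w j\<bar> * s j))"
    if "j \<in> J'" for j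
    using normal_density_affine[OF distr pos, of j "w j" 0] that by (auto simp: J'_def)
  ultimately have "distributed M lborel (\<lambda>\<omega>. \<Sum>j\<in>J'. w j * Y j \<omega>)
      (normal_density (\<Sum>j\<in>J'. 0) (sqrt (\<Sum>j\<in>J'. (\<bar>w j\<bar> * s j)\<^sup>2)))"
    using J'J pos by (intro sum_indep_normal[OF fin' \<open>J' \<noteq> {}\<close>]) (auto simp: J'_def)
  then show ?thesis by (simp add: sum_eq var_eq)
qed

lemma (in prob_space) indep_vars_lincomb_blocks:
  fixes X :: "'i \<Rightarrow> 'a \<Rightarrow> real"
  assumes ind: "indep_vars (\<lambda>_. borel) X I"
    and blocks: "\<And>k. k \<in> L \<Longrightarrow> K k \<subseteq> I" and disj: "disjoint_family_on K L"
  shows "indep_vars (\<lambda>_. borel) (\<lambda>k \<omega>. \<Sum>j\<in>K k. w j * X j \<omega>) L"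
proof -
  have "indep_vars (\<lambda>_. borel)
      (\<lambda>k \<omega>. (\<lambda>f. \<Sum>j\<in>K k. w j * f j) (restrict (\<lambda>i. X i \<omega>) (K k))) L"
    by (rule indep_vars_compose2[OF indep_vars_restrict[OF ind blocks disj]]) measurable
  then show ?thesis
    by (rule indep_vars_cong[THEN iffD1, rotated 3]) auto
qed

lemma (in prob_space) nn_integral_exp_sq_normal:
  assumes Y: "distributed M lborel Y (normal_density 0 s)" and s: "0 < s"
    and t: "0 < 1 - 2 * t * s\<^sup>2"
  shows "(\<integral>\<^sup>+\<omega>. ennreal (exp (t * (Y \<omega>)\<^sup>2)) \<partial>M) = ennreal (1 / sqrt (1 - 2 * t * s\<^sup>2))"
proof -
  define q where "q = sqrt (1 - 2 * t * s\<^sup>2)"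
  have q: "0 < q" "q\<^sup>2 = 1 - 2 * t * s\<^sup>2"
    using t by (simp_all add: q_def)
  \<comment> \<open>the tilted density is again a centred normal density, with standard deviation s / q\<close>
  have tilt: "normal_density 0 s x * exp (t * x\<^sup>2) = 1 / q * normal_density 0 (s / q) x" for x
  proof -
    have "- (x\<^sup>2) / (2 * s\<^sup>2) + t * x\<^sup>2 = - (x\<^sup>2) / (2 * (s / q)\<^sup>2)"
      using q(1) s by (simp add: power_divide field_simps q(2))
    then have exponent: "exp (- (x\<^sup>2) / (2 * s\<^sup>2)) * exp (t * x\<^sup>2) = exp (- (x\<^sup>2) / (2 * (s / q)\<^sup>2))"
      by (simp add: mult_exp_exp)
    have normalizer: "sqrt (2 * pi * (s / q)\<^sup>2) = sqrt (2 * pi * s\<^sup>2) / q"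
      using q(1) s by (simp add: power_divide real_sqrt_divide real_sqrt_mult)
    show ?thesis
      unfolding normal_density_def using exponent normalizer q(1) s by (simp add: field_simps)
  qed
  have "(\<integral>\<^sup>+\<omega>. ennreal (exp (t * (Y \<omega>)\<^sup>2)) \<partial>M)
      = (\<integral>\<^sup>+x. ennreal (normal_density 0 s x) * ennreal (exp (t * x\<^sup>2)) \<partial>lborel)"
    by (rule distributed_nn_integral[OF Y, symmetric]) simp
  also have "\<dots> = (\<integral>\<^sup>+x. ennreal (1 / q) * ennreal (normal_density 0 (s / q) x) \<partial>lborel)"
    using q by (intro nn_integral_cong) (simp add: ennreal_mult[symmetric] tilt)
  also have "\<dots> = ennreal (1 / q) * (\<integral>\<^sup>+x. ennreal (normal_density 0 (s / q) x) \<partial>lborel)"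
    by (rule nn_integral_cmult) simp
  also have "(\<integral>\<^sup>+x. ennreal (normal_density 0 (s / q) x) \<partial>lborel) = 1"
    using q s by (subst nn_integral_eq_integral) auto
  finally show ?thesis by (simp add: q_def)
qed

lemma (in prob_space) nn_integral_exp_sum_sq_normal:
  assumes fin: "finite K" and ind: "indep_vars (\<lambda>_. borel) Y K"
    and distr: "\<And>k. k \<in> K \<Longrightarrow> distributed M lborel (Y k) (normal_density 0 s)"
    and s: "0 < s" and t: "0 < 1 - 2 * t * s\<^sup>2"
  shows "(\<integral>\<^sup>+\<omega>. ennreal (exp (t * (\<Sum>k\<in>K. (Y k \<omega>)\<^sup>2))) \<partial>M)
           = ennreal ((1 - 2 * t * s\<^sup>2) powr (- real (card K) / 2))"
proof -
  have "indep_vars (\<lambda>_. borel) (\<lambda>k \<omega>. ennreal (exp (t * (Y k \<omega>)\<^sup>2))) K"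
    by (rule indep_vars_compose2[OF ind]) measurable
  then have "(\<integral>\<^sup>+\<omega>. (\<Prod>k\<in>K. ennreal (exp (t * (Y k \<omega>)\<^sup>2))) \<partial>M)
      = (\<Prod>k\<in>K. \<integral>\<^sup>+\<omega>. ennreal (exp (t * (Y k \<omega>)\<^sup>2)) \<partial>M)"
    by (rule indep_vars_nn_integral[OF fin]) simp
  also have "\<dots> = ennreal ((1 / sqrt (1 - 2 * t * s\<^sup>2)) ^ card K)"
    using t by (simp add: nn_integral_exp_sq_normal[OF distr s t] ennreal_power)
  also have "(1 / sqrt (1 - 2 * t * s\<^sup>2)) ^ card K = (1 - 2 * t * s\<^sup>2) powr (- real (card K) / 2)"
    using t by (simp add: powr_half_sqrt[symmetric] powr_powr powr_minus_divide powr_realpow[symmetric]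
        powr_divide)
  finally show ?thesis
    using fin by (simp add: sum_distrib_left exp_sum prod_ennreal)
qed

lemma (in prob_space) measure_le_sqrt_nn_integral_mult:
  assumes E: "E \<in> sets M"
    and [measurable]: "F \<in> borel_measurable M" "G \<in> borel_measurable M"
    and nonneg: "\<And>\<omega>. 0 \<le> F \<omega>" "\<And>\<omega>. 0 \<le> G \<omega>"
    and on_E: "\<And>\<omega>. \<omega> \<in> E \<Longrightarrow> 1 \<le> F \<omega> * G \<omega>"
    and int_F: "(\<integral>\<^sup>+\<omega>. ennreal (F \<omega>) \<partial>M) = ennreal a" and "0 < a"
    and int_G: "(\<integral>\<^sup>+\<omega>. ennreal (G \<omega>) \<partial>M) = ennreal b" and "0 < b"
  shows "measure M E \<le> sqrt (a * b)"
proof -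
  define c where "c = sqrt (b / a)"
  have "0 < c" using \<open>0 < a\<close> \<open>0 < b\<close> by (simp add: c_def)
  have pointwise: "indicator E \<omega> \<le> ennreal (c / 2 * F \<omega> + 1 / (2 * c) * G \<omega>)" for \<omega>
  proof (cases "\<omega> \<in> E")
    case True
    have "1 \<le> sqrt ((c * F \<omega>) * (G \<omega> / c))"
      using on_E[OF True] \<open>0 < c\<close> by simp
    also have "\<dots> \<le> (c * F \<omega> + G \<omega> / c) / 2"
      using nonneg \<open>0 < c\<close> by (intro arith_geo_mean_sqrt) auto
    finally show ?thesis using True by (simp add: field_simps)
  qed simp
  have "emeasure M E \<le> (\<integral>\<^sup>+\<omega>. ennreal (c / 2 * F \<omega> + 1 / (2 * c) * G \<omega>) \<partial>M)"
    unfolding nn_integral_indicator[OF E, symmetric] by (rule nn_integral_mono) (rule pointwise)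
  also have "\<dots> = (\<integral>\<^sup>+\<omega>. ennreal (c / 2) * ennreal (F \<omega>) + ennreal (1 / (2 * c)) * ennreal (G \<omega>) \<partial>M)"
    using nonneg \<open>0 < c\<close> by (intro nn_integral_cong) (simp add: ennreal_mult[symmetric])
  also have "\<dots> = ennreal (c / 2 * a + 1 / (2 * c) * b)"
    using \<open>0 < a\<close> \<open>0 < b\<close> \<open>0 < c\<close>
    by (simp add: nn_integral_add nn_integral_cmult int_F int_G ennreal_mult[symmetric])
  also have "c / 2 * a + 1 / (2 * c) * b = sqrt (a * b)"
    using \<open>0 < a\<close> \<open>0 < b\<close>
    by (simp add: c_def real_sqrt_divide real_sqrt_mult field_simps)
  finally show ?thesis
    using \<open>0 < a\<close> \<open>0 < b\<close> by (simp add: emeasure_eq_measure)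
qed

lemma (in prob_space) prob_weighted_sum_sq_le:
  fixes u v :: "nat \<Rightarrow> 'a \<Rightarrow> real"
  assumes ind_u: "indep_vars (\<lambda>_. borel) u {..<d}" and ind_v: "indep_vars (\<lambda>_. borel) v {..<d}"
    and distr_u: "\<And>k. k < d \<Longrightarrow> distributed M lborel (u k) (normal_density 0 su)"
    and distr_v: "\<And>k. k < d \<Longrightarrow> distributed M lborel (v k) (normal_density 0 sv)"
    and "0 < su" "0 < sv" and R_pos: "0 < B * sv\<^sup>2" and R_less_P: "B * sv\<^sup>2 < A * su\<^sup>2"
  shows "measure M {\<omega> \<in> space M. A * (\<Sum>k<d. (u k \<omega>)\<^sup>2) \<le> B * (\<Sum>k<d. (v k \<omega>)\<^sup>2)}
           \<le> (1 - ((A * su\<^sup>2 - B * sv\<^sup>2) / (A * su\<^sup>2 + B * sv\<^sup>2))\<^sup>2) powr (real d / 4)"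
proof -
  define P where "P = A * su\<^sup>2"
  define R where "R = B * sv\<^sup>2"
  have "0 < R" "R < P" using R_pos R_less_P by (simp_all add: P_def R_def)
  \<comment> \<open>maximises \<open>(1 + 4 t P) (1 - 4 t R)\<close>, i.e. minimises the product of the two moment generating functions\<close>
  define t where "t = (P - R) / (8 * P * R)"
  have "0 < t" using \<open>0 < R\<close> \<open>R < P\<close> by (simp add: t_def)
  have "1 + 4 * t * P = (P + R) / (2 * R)" "1 - 4 * t * R = (P + R) / (2 * P)"
    using \<open>0 < R\<close> \<open>R < P\<close> by (simp_all add: t_def field_simps)
  then have mgf_arg_u: "1 - 2 * (- 2 * t * A) * su\<^sup>2 = (P + R) / (2 * R)"
    and mgf_arg_v: "1 - 2 * (2 * t * B) * sv\<^sup>2 = (P + R) / (2 * P)"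
    by (simp_all add: P_def R_def algebra_simps)
  have [measurable]: "u k \<in> borel_measurable M" "v k \<in> borel_measurable M" if "k < d" for k
    using distributed_measurable[OF distr_u[OF that]] distributed_measurable[OF distr_v[OF that]]
    by simp_all
  define F where "F \<omega> = exp (- 2 * t * A * (\<Sum>k<d. (u k \<omega>)\<^sup>2))" for \<omega>
  define G where "G \<omega> = exp (2 * t * B * (\<Sum>k<d. (v k \<omega>)\<^sup>2))" for \<omega>
  have "(\<integral>\<^sup>+\<omega>. ennreal (F \<omega>) \<partial>M) = ennreal (((P + R) / (2 * R)) powr (- real d / 2))"
    using nn_integral_exp_sum_sq_normal[OF _ ind_u distr_u \<open>0 < su\<close>, of "- 2 * t * A"]
    unfolding F_def mgf_arg_u using \<open>0 < R\<close> \<open>R < P\<close> by simp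
  moreover have "(\<integral>\<^sup>+\<omega>. ennreal (G \<omega>) \<partial>M) = ennreal (((P + R) / (2 * P)) powr (- real d / 2))"
    using nn_integral_exp_sum_sq_normal[OF _ ind_v distr_v \<open>0 < sv\<close>, of "2 * t * B"]
    unfolding G_def mgf_arg_v using \<open>0 < R\<close> \<open>R < P\<close> by simp
  moreover have "1 \<le> F \<omega> * G \<omega>"
    if "\<omega> \<in> {\<omega> \<in> space M. A * (\<Sum>k<d. (u k \<omega>)\<^sup>2) \<le> B * (\<Sum>k<d. (v k \<omega>)\<^sup>2)}" for \<omega>
    using that \<open>0 < t\<close> by (simp add: F_def G_def mult_exp_exp algebra_simps)
  ultimately have "measure M {\<omega> \<in> space M. A * (\<Sum>k<d. (u k \<omega>)\<^sup>2) \<le> B * (\<Sum>k<d. (v k \<omega>)\<^sup>2)}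
      \<le> sqrt (((P + R) / (2 * R)) powr (- real d / 2) * ((P + R) / (2 * P)) powr (- real d / 2))"
    using \<open>0 < R\<close> \<open>R < P\<close>
    by (intro measure_le_sqrt_nn_integral_mult) (auto simp: F_def G_def)
  also have "\<dots> = (1 - ((P - R) / (P + R))\<^sup>2) powr (real d / 4)"
  proof -
    have "1 - ((P - R) / (P + R))\<^sup>2 = 1 / ((P + R) / (2 * R) * ((P + R) / (2 * P)))"
      using \<open>0 < R\<close> \<open>R < P\<close>
      by (simp add: power_divide divide_simps) (simp add: power2_eq_square algebra_simps)
    then show ?thesis
      using \<open>0 < R\<close> \<open>R < P\<close>
      by (simp add: powr_mult[symmetric] powr_half_sqrt[symmetric] powr_powr powr_minus_divide
          powr_divide)
  qed
  finally show ?thesis by (simp add: P_def R_def)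
qed

lemma sum_sq_indicator_diff_uniform:
  fixes C :: "'a set"
  assumes "finite N" "C \<subseteq> N" "C \<noteq> {}" "i \<in> N"
  shows "(\<Sum>m\<in>N. ((if m = i then 1 else 0) - (if m \<in> C then 1 / real (card C) else 0))\<^sup>2)
     = (if i \<in> C then 1 - 1 / real (card C) else 1 + 1 / real (card C))"
proof -
  have "finite C" using assms finite_subset by blast
  then have "0 < real (card C)" using assms by (simp add: card_gt_0_iff)
  have expand: "((if m = i then 1 else 0) - (if m \<in> C then 1 / real (card C) else 0))\<^sup>2
     = (if m = i then 1 else 0) - (if m = i then (if i \<in> C then 2 / real (card C) else 0) else 0)
       + (if m \<in> C then 1 / (real (card C))\<^sup>2 else 0)" for m
    by (auto simp: power2_eq_square field_simps)
  have "(\<Sum>m\<in>N. (if m \<in> C then 1 / (real (card C))\<^sup>2 else 0)) = 1 / real (card C)"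
    using assms \<open>0 < real (card C)\<close>
    by (simp add: sum.If_cases Int_absorb2 Int_commute power2_eq_square)
  then show ?thesis
    using assms unfolding expand sum.distrib sum_subtractf by auto
qed

lemma purity_less_one_iff:
  assumes "finite C" "C \<noteq> {}"
  shows "purity C S < 1 \<longleftrightarrow> \<not> C \<subseteq> S"
proof -
  have "0 < card C" using assms by (simp add: card_gt_0_iff)
  then have "purity C S < 1 \<longleftrightarrow> card (C \<inter> S) < card C"
    by (simp add: purity_def)
  also have "\<dots> \<longleftrightarrow> C \<inter> S \<noteq> C"
    using assms(1) by (metis Int_lower1 card_mono card_subset_eq le_neq_implies_less less_irrefl)
  finally show ?thesis by blast
qed

lemma purity_less_one_if_le_purity:
  assumes "C \<union> C' = N" "finite N" "C \<noteq> {}" "C' \<noteq> {}" "\<not> N \<subseteq> S"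
    and "purity C S \<le> purity C' S"
  shows "purity C S < 1"
proof (rule ccontr)
  assume "\<not> purity C S < 1"
  moreover from this have "\<not> purity C' S < 1" using assms(6) by simp
  moreover have "finite C" "finite C'" using assms(1,2) by (auto dest: finite_subset)
  ultimately have "C \<subseteq> S" "C' \<subseteq> S" using assms(3,4) by (simp_all add: purity_less_one_iff)
  then show False using assms(1,5) by blast
qed

lemma two_le_card_if_purity_less_one:
  assumes "finite C" "i \<in> C" "i \<in> S" "purity C S < 1"
  shows "2 \<le> card C"
proof -
  obtain m where "m \<in> C" "m \<notin> S"
    using assms purity_less_one_iff[of C S] by auto
  then have "card {i, m} \<le> card C" "m \<noteq> i"
    using assms by (auto intro: card_mono)
  then show ?thesis by simp
qed

lemma hartigan_coefficient_less:
  fixes c c' :: nat and r r' :: real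
  assumes "2 \<le> c" "r < 1" "r \<le> r'" "r' \<le> 1"
  shows "real c' / (real c' + 1) * (1 - r')\<^sup>2 < real c / (real c - 1) * (1 - r)\<^sup>2"
proof -
  have "real c' / (real c' + 1) \<le> 1" by simp
  then have "real c' / (real c' + 1) * (1 - r')\<^sup>2 \<le> (1 - r')\<^sup>2"
    by (intro mult_left_le_one_le) auto
  also have "\<dots> \<le> (1 - r)\<^sup>2"
    using assms by (simp add: power_mono)
  also have "\<dots> < real c / (real c - 1) * (1 - r)\<^sup>2"
    using assms by (simp add: field_simps)
  finally show ?thesis .
qed

text \<open>The Hartigan weights \<open>c / (c - 1)\<close> and \<open>c / (c + 1)\<close> are the reciprocals of the noise
  variance factors \<open>1 - 1 / c\<close> and \<open>1 + 1 / c\<close> of the displacement from a centroid, so after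
  weighting the noise contributes exactly \<open>\<sigma>\<^sup>2\<close> to either distance.\<close>

lemma hartigan_weight_leave_variance:
  fixes c :: nat and r \<tau> \<sigma> :: real
  assumes "2 \<le> c"
  shows "real c / (real c - 1) * (2 * \<tau>\<^sup>2 * (1 - r)\<^sup>2 + \<sigma>\<^sup>2 * (1 - 1 / real c))
           = 2 * \<tau>\<^sup>2 * (real c / (real c - 1) * (1 - r)\<^sup>2) + \<sigma>\<^sup>2"
  using assms by (simp add: field_simps)

lemma hartigan_weight_join_variance:
  fixes c :: nat and r \<tau> \<sigma> :: real
  assumes "0 < c"
  shows "real c / (real c + 1) * (2 * \<tau>\<^sup>2 * (1 - r)\<^sup>2 + \<sigma>\<^sup>2 * (1 + 1 / real c))
           = 2 * \<tau>\<^sup>2 * (real c / (real c + 1) * (1 - r)\<^sup>2) + \<sigma>\<^sup>2"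
proof -
  have inverse: "real c / (real c + 1) * (1 + 1 / real c) = 1"
    using assms by (simp add: divide_simps)
  have "w * (2 * \<tau>\<^sup>2 * (1 - r)\<^sup>2 + \<sigma>\<^sup>2 * f) = 2 * \<tau>\<^sup>2 * (w * (1 - r)\<^sup>2) + \<sigma>\<^sup>2 * (w * f)"
    for w f :: real
    by (simp add: algebra_simps)
  from this[of "real c / (real c + 1)" "1 + 1 / real c"] show ?thesis
    unfolding inverse by (simp only: mult_1_right)
qed

lemma one_minus_sq_ratio_bounds:
  fixes a b \<tau> \<sigma> :: real
  assumes "0 \<le> b" "b < a" "0 < \<tau>" "0 < \<sigma>"
  defines "\<rho> \<equiv> 1 - ((\<tau>\<^sup>2 * (a - b)) / (\<tau>\<^sup>2 * (a + b) + \<sigma>\<^sup>2))\<^sup>2"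
  shows "0 \<le> \<rho>" "\<rho> < 1"
proof -
  define r where "r = (\<tau>\<^sup>2 * (a - b)) / (\<tau>\<^sup>2 * (a + b) + \<sigma>\<^sup>2)"
  have "0 < \<tau>\<^sup>2 * (a - b)" using assms by simp
  moreover have "\<tau>\<^sup>2 * (a - b) < \<tau>\<^sup>2 * (a + b) + \<sigma>\<^sup>2"
    using assms by (simp add: algebra_simps add_pos_nonneg)
  ultimately have "0 < r" "r < 1" by (simp_all add: r_def)
  then show "0 \<le> \<rho>" "\<rho> < 1"
    by (simp_all add: \<rho>_def r_def[symmetric] power_le_one)
qed

locale two_center_gaussian_model = prob_space M for M :: "'w measure" +
  fixes n d :: nat and \<tau> \<sigma> :: real
    and X :: "(nat \<times> nat) + (nat \<times> nat) \<Rightarrow> 'w \<Rightarrow> real" and z :: "nat \<Rightarrow> nat"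
  assumes tau_pos: "0 < \<tau>" and sigma_pos: "0 < \<sigma>"
    and indep_X: "indep_vars (\<lambda>_. borel) X (Inl ` ({1,2} \<times> {..<d}) \<union> Inr ` ({1..n} \<times> {..<d}))"
    and center_normal: "\<And>l k. l \<in> {1,2} \<Longrightarrow> k < d \<Longrightarrow>
      distributed M lborel (X (Inl (l,k))) (normal_density 0 \<tau>)"
    and noise_normal: "\<And>m k. m \<in> {1..n} \<Longrightarrow> k < d \<Longrightarrow>
      distributed M lborel (X (Inr (m,k))) (normal_density 0 \<sigma>)"
    and labels: "\<And>m. m \<in> {1..n} \<Longrightarrow> z m \<in> {1,2}"
begin

definition data :: "'w \<Rightarrow> nat \<Rightarrow> nat \<Rightarrow> real" where
  "data \<omega> m k = X (Inl (z m, k)) \<omega> + X (Inr (m, k)) \<omega>"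

definition coordinate_block :: "nat \<Rightarrow> ((nat \<times> nat) + (nat \<times> nat)) set" where
  "coordinate_block k = (\<lambda>l. Inl (l, k)) ` {1,2} \<union> (\<lambda>m. Inr (m, k)) ` {1..n}"

definition residual_weight :: "nat set \<Rightarrow> nat \<Rightarrow> (nat \<times> nat) + (nat \<times> nat) \<Rightarrow> real" where
  "residual_weight C i = case_sum
     (\<lambda>(l, _). (if l = z i then 1 else 0) - real (card {m \<in> C. z m = l}) / real (card C))
     (\<lambda>(m, _). (if m = i then 1 else 0) - (if m \<in> C then 1 / real (card C) else 0))"

lemma sum_coordinate_block:
  "(\<Sum>q\<in>coordinate_block k. g q) = (\<Sum>l\<in>{1,2}. g (Inl (l, k))) + (\<Sum>m\<in>{1..n}. g (Inr (m, k)))"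
  unfolding coordinate_block_def
  by (subst sum.union_disjoint) (auto simp: sum.reindex inj_on_def)

lemma data_minus_centroid_eq_sum:
  assumes "C \<subseteq> {1..n}" "i \<in> {1..n}"
  shows "data \<omega> i k - centroid (data \<omega>) C k
           = (\<Sum>q\<in>coordinate_block k. residual_weight C i q * X q \<omega>)"
proof -
  have "finite C" using assms(1) finite_subset by blast
  have "z ` C \<subseteq> {1,2}" using assms(1) labels by force
  have "(\<Sum>m\<in>C. X (Inl (z m, k)) \<omega>) = (\<Sum>l\<in>{1,2}. \<Sum>m | m \<in> C \<and> z m = l. X (Inl (z m, k)) \<omega>)"
    by (rule sum.group[OF \<open>finite C\<close> _ \<open>z ` C \<subseteq> {1,2}\<close>, symmetric]) simp
  also have "\<dots> = (\<Sum>l\<in>{1,2}. real (card {m \<in> C. z m = l}) * X (Inl (l, k)) \<omega>)"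
    by (intro sum.cong refl) simp
  finally have centers: "(\<Sum>l\<in>{1,2}. real (card {m \<in> C. z m = l}) * X (Inl (l, k)) \<omega>)
      = (\<Sum>m\<in>C. X (Inl (z m, k)) \<omega>)" ..
  have "(\<Sum>l\<in>{1,2}. residual_weight C i (Inl (l, k)) * X (Inl (l, k)) \<omega>)
      = (\<Sum>l\<in>{1,2}. (if l = z i then X (Inl (l, k)) \<omega> else 0)
          - real (card {m \<in> C. z m = l}) * X (Inl (l, k)) \<omega> / real (card C))"
    by (intro sum.cong refl) (simp add: residual_weight_def left_diff_distrib)
  also have "\<dots> = X (Inl (z i, k)) \<omega> - (\<Sum>m\<in>C. X (Inl (z m, k)) \<omega>) / real (card C)"
    using labels[OF assms(2)] unfolding sum_subtractf sum_divide_distrib[symmetric] centers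
    by (simp add: sum.delta')
  finally have center_part: "(\<Sum>l\<in>{1,2}. residual_weight C i (Inl (l, k)) * X (Inl (l, k)) \<omega>)
      = X (Inl (z i, k)) \<omega> - (\<Sum>m\<in>C. X (Inl (z m, k)) \<omega>) / real (card C)" .
  have noise_part: "(\<Sum>m\<in>{1..n}. residual_weight C i (Inr (m, k)) * X (Inr (m, k)) \<omega>)
      = X (Inr (i, k)) \<omega> - (\<Sum>m\<in>C. X (Inr (m, k)) \<omega>) / real (card C)"
    using assms
    by (simp add: residual_weight_def left_diff_distrib sum_subtractf sum_divide_distrib
        if_distrib[of "\<lambda>r. r * _"] sum.If_cases Int_absorb1)
  show ?thesis
    unfolding sum_coordinate_block center_part noise_part
    by (simp add: data_def centroid_def sum.distrib add_divide_distrib)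
qed

lemma indep_data_minus_centroid:
  assumes "C \<subseteq> {1..n}" "i \<in> {1..n}"
  shows "indep_vars (\<lambda>_. borel) (\<lambda>k \<omega>. data \<omega> i k - centroid (data \<omega>) C k) {..<d}"
proof -
  have "indep_vars (\<lambda>_. borel)
      (\<lambda>k \<omega>. \<Sum>q\<in>coordinate_block k. residual_weight C i q * X q \<omega>) {..<d}"
    by (rule indep_vars_lincomb_blocks[OF indep_X])
      (auto simp: coordinate_block_def disjoint_family_on_def)
  then show ?thesis
    using assms by (simp add: data_minus_centroid_eq_sum)
qed

lemma sum_sq_center_weights:
  assumes "C \<subseteq> {1..n}" "C \<noteq> {}" "i \<in> {1..n}"
  shows "(\<Sum>l\<in>{1,2}. (residual_weight C i (Inl (l, k)))\<^sup>2)
           = 2 * (1 - purity C {m \<in> {1..n}. z m = z i})\<^sup>2"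
proof -
  define R where "R = purity C {m \<in> {1..n}. z m = z i}"
  have "finite C" "0 < card C" using assms finite_subset by (auto simp: card_gt_0_iff)
  have same: "{m \<in> C. z m = z i} = C \<inter> {m \<in> {1..n}. z m = z i}" using assms(1) by auto
  have "{m \<in> C. z m = 3 - z i} = C - {m \<in> C. z m = z i}"
    using assms(1) labels labels[OF assms(3)] by force
  then have other: "real (card {m \<in> C. z m = 3 - z i}) = real (card C) - real (card {m \<in> C. z m = z i})"
    using \<open>finite C\<close> by (simp add: card_Diff_subset card_mono)
  have "residual_weight C i (Inl (z i, k)) = 1 - R"
    by (simp add: residual_weight_def R_def purity_def same)
  moreover have "residual_weight C i (Inl (3 - z i, k)) = - (1 - R)"
    using labels[OF assms(3)] \<open>0 < card C\<close>
    by (auto simp: residual_weight_def R_def purity_def same other diff_divide_distrib)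
  moreover have "{1,2} = {z i, 3 - z i}" "z i \<noteq> 3 - z i" using labels[OF assms(3)] by auto
  ultimately show ?thesis by (simp add: R_def power2_commute)
qed

lemma distributed_data_minus_centroid:
  assumes "C \<subseteq> {1..n}" "C \<noteq> {}" "C \<noteq> {i}" "i \<in> {1..n}" "k < d"
  shows "distributed M lborel (\<lambda>\<omega>. data \<omega> i k - centroid (data \<omega>) C k)
    (normal_density 0 (sqrt (2 * \<tau>\<^sup>2 * (1 - purity C {m \<in> {1..n}. z m = z i})\<^sup>2
      + \<sigma>\<^sup>2 * (if i \<in> C then 1 - 1 / real (card C) else 1 + 1 / real (card C)))))"
proof -
  define sd :: "(nat \<times> nat) + (nat \<times> nat) \<Rightarrow> real" where "sd = case_sum (\<lambda>_. \<tau>) (\<lambda>_. \<sigma>)"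
  have "finite C" using assms(1) finite_subset by blast
  have "1 < card C" if "i \<in> C"
    using assms(2,3) that \<open>finite C\<close> by (metis card_1_singletonE card_gt_0_iff less_one nat_neq_iff singletonD)
  then have noise_var_pos: "0 < (if i \<in> C then 1 - 1 / real (card C) else 1 + 1 / real (card C))"
    by (auto simp: add_pos_nonneg)
  have "(\<Sum>q\<in>coordinate_block k. (residual_weight C i q)\<^sup>2 * (sd q)\<^sup>2)
      = \<tau>\<^sup>2 * (\<Sum>l\<in>{1,2}. (residual_weight C i (Inl (l, k)))\<^sup>2)
        + \<sigma>\<^sup>2 * (\<Sum>m\<in>{1..n}. (residual_weight C i (Inr (m, k)))\<^sup>2)"
    by (simp add: sum_coordinate_block sd_def sum_distrib_left algebra_simps)
  also have "\<dots> = 2 * \<tau>\<^sup>2 * (1 - purity C {m \<in> {1..n}. z m = z i})\<^sup>2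
      + \<sigma>\<^sup>2 * (if i \<in> C then 1 - 1 / real (card C) else 1 + 1 / real (card C))"
    unfolding sum_sq_center_weights[OF assms(1,2,4)]
    using assms sum_sq_indicator_diff_uniform[of "{1..n}" C i] by (simp add: residual_weight_def)
  finally have var: "(\<Sum>q\<in>coordinate_block k. (residual_weight C i q)\<^sup>2 * (sd q)\<^sup>2) = \<dots>" .
  have "distributed M lborel (\<lambda>\<omega>. \<Sum>q\<in>coordinate_block k. residual_weight C i q * X q \<omega>)
      (normal_density 0 (sqrt (\<Sum>q\<in>coordinate_block k. (residual_weight C i q)\<^sup>2 * (sd q)\<^sup>2)))"
  proof (rule distributed_normal_lincomb)
    show "indep_vars (\<lambda>_. borel) X (coordinate_block k)"
      by (rule indep_vars_subset[OF indep_X]) (use assms(5) in \<open>auto simp: coordinate_block_def\<close>)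
  qed (use assms(5) var noise_var_pos tau_pos sigma_pos center_normal noise_normal in
      \<open>auto simp: coordinate_block_def sd_def intro!: add_nonneg_pos\<close>)
  then show ?thesis
    using assms by (simp add: data_minus_centroid_eq_sum var)
qed

lemma prob_hartigan_dist_le:
  fixes C C' :: "nat set" and i :: nat
  defines "a \<equiv> real (card C) / (real (card C) - 1) * (1 - purity C {m \<in> {1..n}. z m = z i})\<^sup>2"
    and "b \<equiv> real (card C') / (real (card C') + 1) * (1 - purity C' {m \<in> {1..n}. z m = z i})\<^sup>2"
  assumes C: "C \<subseteq> {1..n}" "i \<in> C" "2 \<le> card C"
    and C': "C' \<subseteq> {1..n}" "C' \<noteq> {}" "i \<notin> C'"
    and gap: "b < a"
  shows "measure M {\<omega> \<in> space M. hartigan_dist d (data \<omega>) i C \<le> hartigan_dist d (data \<omega>) i C'}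
           \<le> (1 - ((\<tau>\<^sup>2 * (a - b)) / (\<tau>\<^sup>2 * (a + b) + \<sigma>\<^sup>2))\<^sup>2) powr (real d / 4)"
proof -
  define A where "A = real (card C) / (real (card C) - 1)"
  define B where "B = real (card C') / (real (card C') + 1)"
  define Vu where "Vu = 2 * \<tau>\<^sup>2 * (1 - purity C {m \<in> {1..n}. z m = z i})\<^sup>2 + \<sigma>\<^sup>2 * (1 - 1 / real (card C))"
  define Vv where "Vv = 2 * \<tau>\<^sup>2 * (1 - purity C' {m \<in> {1..n}. z m = z i})\<^sup>2 + \<sigma>\<^sup>2 * (1 + 1 / real (card C'))"
  have "i \<in> {1..n}" "C \<noteq> {}" "C \<noteq> {i}" "C' \<noteq> {i}" using C C'(3) by auto
  have "0 < card C'" using C' finite_subset by (auto simp: card_gt_0_iff)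
  have "1 / real (card C) < 1" using C(3) by simp
  then have "0 < Vu" using sigma_pos unfolding Vu_def by (intro add_nonneg_pos) auto
  have "0 < 1 + 1 / real (card C')" by (simp add: add_pos_nonneg)
  then have "0 < Vv" using sigma_pos unfolding Vv_def by (intro add_nonneg_pos) auto
  have P: "A * Vu = 2 * \<tau>\<^sup>2 * a + \<sigma>\<^sup>2"
    unfolding A_def Vu_def a_def using C(3) by (rule hartigan_weight_leave_variance)
  have R: "B * Vv = 2 * \<tau>\<^sup>2 * b + \<sigma>\<^sup>2"
    unfolding B_def Vv_def b_def using \<open>0 < card C'\<close> by (rule hartigan_weight_join_variance)
  have "0 \<le> b" by (simp add: b_def)
  have bound: "measure M {\<omega> \<in> space M. A * (\<Sum>k<d. (data \<omega> i k - centroid (data \<omega>) C k)\<^sup>2)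
                            \<le> B * (\<Sum>k<d. (data \<omega> i k - centroid (data \<omega>) C' k)\<^sup>2)}
      \<le> (1 - ((A * (sqrt Vu)\<^sup>2 - B * (sqrt Vv)\<^sup>2) / (A * (sqrt Vu)\<^sup>2 + B * (sqrt Vv)\<^sup>2))\<^sup>2) powr (real d / 4)"
  proof (rule prob_weighted_sum_sq_le)
    show "distributed M lborel (\<lambda>\<omega>. data \<omega> i k - centroid (data \<omega>) C k) (normal_density 0 (sqrt Vu))"
      if "k < d" for k
      using distributed_data_minus_centroid[OF C(1) \<open>C \<noteq> {}\<close> \<open>C \<noteq> {i}\<close> \<open>i \<in> {1..n}\<close> that] C(2)
      by (simp add: Vu_def)
    show "distributed M lborel (\<lambda>\<omega>. data \<omega> i k - centroid (data \<omega>) C' k) (normal_density 0 (sqrt Vv))"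
      if "k < d" for k
      using distributed_data_minus_centroid[OF C'(1,2) \<open>C' \<noteq> {i}\<close> \<open>i \<in> {1..n}\<close> that] C'(3)
      by (simp add: Vv_def)
  qed (use indep_data_minus_centroid[OF C(1) \<open>i \<in> {1..n}\<close>]
        indep_data_minus_centroid[OF C'(1) \<open>i \<in> {1..n}\<close>]
        \<open>0 < Vu\<close> \<open>0 < Vv\<close> P R gap \<open>0 \<le> b\<close> tau_pos sigma_pos in \<open>auto intro: add_nonneg_pos\<close>)
  have num: "A * (sqrt Vu)\<^sup>2 - B * (sqrt Vv)\<^sup>2 = 2 * (\<tau>\<^sup>2 * (a - b))"
    and den: "A * (sqrt Vu)\<^sup>2 + B * (sqrt Vv)\<^sup>2 = 2 * (\<tau>\<^sup>2 * (a + b) + \<sigma>\<^sup>2)"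
    using \<open>0 < Vu\<close> \<open>0 < Vv\<close> by (simp_all add: P R algebra_simps)
  then have ratio: "(A * (sqrt Vu)\<^sup>2 - B * (sqrt Vv)\<^sup>2) / (A * (sqrt Vu)\<^sup>2 + B * (sqrt Vv)\<^sup>2)
      = (\<tau>\<^sup>2 * (a - b)) / (\<tau>\<^sup>2 * (a + b) + \<sigma>\<^sup>2)"
    unfolding num by (simp only: mult_divide_mult_cancel_left zero_neq_numeral not_False_eq_True)
  show ?thesis
    using bound C(2) C'(3) unfolding ratio by (simp add: hartigan_dist_def sqdist_def A_def B_def)
qed

end

theorem theorem3p9:
  fixes n d :: nat and \<tau> \<sigma> :: real
    and M :: "'w measure"
    and X :: "(nat \<times> nat) + (nat \<times> nat) \<Rightarrow> 'w \<Rightarrow> real"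
    and z :: "nat \<Rightarrow> nat" and C :: "nat \<Rightarrow> nat set"
    and i j l0 :: nat
  assumes "n \<ge> 2" and "d \<ge> 1" and "\<tau> > 0" and "\<sigma> > 0"
    and "prob_space M"
    \<comment> \<open>X (Inl (l,k)) = k-th coordinate of the center mu*_l; X (Inr (m,k)) = k-th coordinate of xi_m\<close>
    and "prob_space.indep_vars M (\<lambda>_. borel) X
           (Inl ` ({1,2} \<times> {..<d}) \<union> Inr ` ({1..n} \<times> {..<d}))"
    and "\<And>l k. l \<in> {1,2} \<Longrightarrow> k < d \<Longrightarrow>
           distributed M lborel (X (Inl (l,k))) (normal_density 0 \<tau>)"
    and "\<And>m k. m \<in> {1..n} \<Longrightarrow> k < d \<Longrightarrow>
           distributed M lborel (X (Inr (m,k))) (normal_density 0 \<sigma>)"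
    and "\<forall>m\<in>{1..n}. z m \<in> {1,2}"
    and "{m\<in>{1..n}. z m = 1} \<noteq> {}" and "{m\<in>{1..n}. z m = 2} \<noteq> {}"
    and "C 1 \<union> C 2 = {1..n}" and "C 1 \<inter> C 2 = {}"
    and "C 1 \<noteq> {}" and "C 2 \<noteq> {}"
    and "i \<in> {1..n}" and "l0 = z i"
    and "j \<in> {1,2}" and "i \<in> C j"
    and "0 < purity (C j) {m\<in>{1..n}. z m = l0}"
    and "purity (C j) {m\<in>{1..n}. z m = l0} \<le> purity (C (3 - j)) {m\<in>{1..n}. z m = l0}"
    and "purity (C (3 - j)) {m\<in>{1..n}. z m = l0} \<le> 1"
  shows
   "let S = {m\<in>{1..n}. z m = l0};
        jb = 3 - j;
        Rj = purity (C j) S; Rjb = purity (C jb) S;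
        a = real (card (C j)) / (real (card (C j)) - 1) * (1 - Rj)^2;
        b = real (card (C jb)) / (real (card (C jb)) + 1) * (1 - Rjb)^2;
        \<rho> = 1 - ((\<tau>^2 * (a - b)) / (\<tau>^2 * (a + b) + \<sigma>^2))^2;
        x = (\<lambda>\<omega> m k. X (Inl (z m, k)) \<omega> + X (Inr (m, k)) \<omega>)
    in measure M {\<omega> \<in> space M. hartigan_dist d (x \<omega>) i (C j) \<le> hartigan_dist d (x \<omega>) i (C jb)}
         \<le> \<rho> powr (real d / 4)
       \<and> 0 \<le> \<rho> \<and> \<rho> < 1"
proof -
  interpret two_center_gaussian_model M n d \<tau> \<sigma> X z
    by (rule two_center_gaussian_model.intro[OF assms(5) two_center_gaussian_model_axioms.intro])
      (use assms(3,4,6-9) in simp_all)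
  define S where "S = {m \<in> {1..n}. z m = l0}"
  define jb where "jb = 3 - j"
  define a where "a = real (card (C j)) / (real (card (C j)) - 1) * (1 - purity (C j) S)\<^sup>2"
  define b where "b = real (card (C jb)) / (real (card (C jb)) + 1) * (1 - purity (C jb) S)\<^sup>2"
  have "j = 1 \<and> jb = 2 \<or> j = 2 \<and> jb = 1"
    using assms(18) by (auto simp: jb_def)
  then have partition: "C j \<union> C jb = {1..n}" "C j \<inter> C jb = {}" "C jb \<noteq> {}"
    using assms(12-15) by (auto simp: Int_commute Un_commute)
  then have Cj: "C j \<subseteq> {1..n}" "finite (C j)" and Cjb: "C jb \<subseteq> {1..n}" "i \<notin> C jb"
    using assms(19) finite_subset[of "C j" "{1..n}"] by blast+
  have "\<not> {1..n} \<subseteq> S"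
    using assms(10,11) by (cases "l0 = 1") (auto simp: S_def)
  then have "purity (C j) S < 1"
    using partition assms(19,21) by (intro purity_less_one_if_le_purity) (auto simp: S_def jb_def)
  then have "2 \<le> card (C j)"
    using Cj(2) assms(16,17,19) by (intro two_le_card_if_purity_less_one) (auto simp: S_def)
  have "b < a"
    unfolding a_def b_def using \<open>2 \<le> card (C j)\<close> \<open>purity (C j) S < 1\<close> assms(21,22)
    by (intro hartigan_coefficient_less) (auto simp: S_def jb_def)
  moreover have "data = (\<lambda>\<omega> m k. X (Inl (z m, k)) \<omega> + X (Inr (m, k)) \<omega>)"
    by (simp add: fun_eq_iff data_def)
  ultimately show ?thesis
    using prob_hartigan_dist_le[OF Cj(1) assms(19) \<open>2 \<le> card (C j)\<close> Cjb(1) partition(3) Cjb(2)]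
      one_minus_sq_ratio_bounds[of b a \<tau> \<sigma>] assms(3,4)
    unfolding Let_def S_def[symmetric] jb_def[symmetric] a_def[symmetric] b_def[symmetric]
    by (simp add: a_def b_def S_def assms(17))
qed

end
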